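(* Let $d\geq 1$ and let $n,m$ be integers with $\binom{d}{2}\leq m\leq dn-\binom{d+1}{2}$ and such that $m\bmod d=0$ if $d$ is odd and $m\bmod d=\frac{d}{2}$ if $d$ is even. Then there exists a $d$-degenerate graph $G$ with $n$ vertices and $m$ edges such that $$c(G)= n+\frac{(2^d-1)m}{d}-\frac{(d-3)2^d+d+1}{2}.$$
   Context: All graphs are finite, simple and undirected. A graph $G$ is $d$-degenerate if every subgraph of $G$ has a vertex of degree at most $d$. A clique of a graph $G$ is a (possibly empty) set of pairwise adjacent vertices; $c(G)$ denotes the number of cliques of $G$ (including the empty clique, all single vertices and all edges). *)

theory Defs
  imports Complex_Main
begin

definition simple_graph :: "'a set \<Rightarrow> 'a set set \<Rightarrow> bool" where
  "simple_graph V E \<longleftrightarrow> finite V \<and>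
     (\<forall>e\<in>E. \<exists>u v. e = {u, v} \<and> u \<noteq> v \<and> u \<in> V \<and> v \<in> V)"

definition degree :: "'a set set \<Rightarrow> 'a \<Rightarrow> nat" where
  "degree E v = card {e\<in>E. v \<in> e}"

definition subgraph :: "'a set \<Rightarrow> 'a set set \<Rightarrow> 'a set \<Rightarrow> 'a set set \<Rightarrow> bool" where
  "subgraph V' E' V E \<longleftrightarrow> V' \<subseteq> V \<and> E' \<subseteq> E \<and> (\<forall>e\<in>E'. e \<subseteq> V')"

definition degenerate :: "nat \<Rightarrow> 'a set \<Rightarrow> 'a set set \<Rightarrow> bool" where
  "degenerate d V E \<longleftrightarrow>
     (\<forall>V' E'. subgraph V' E' V E \<and> V' \<noteq> {} \<longrightarrow> (\<exists>v\<in>V'. degree E' v \<le> d))"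

definition is_clique :: "'a set \<Rightarrow> 'a set set \<Rightarrow> 'a set \<Rightarrow> bool" where
  "is_clique V E S \<longleftrightarrow> S \<subseteq> V \<and> (\<forall>u\<in>S. \<forall>v\<in>S. u \<noteq> v \<longrightarrow> {u, v} \<in> E)"

text \<open>Number of cliques, including the empty clique.\<close>
definition num_cliques :: "'a set \<Rightarrow> 'a set set \<Rightarrow> nat" where
  "num_cliques V E = card {S. is_clique V E S}"

end

theory Submission
  imports Defs
begin

text \<open>The witness is a complete split graph: a clique \<open>K\<close> on \<open>d\<close> vertices together
  with \<open>k\<close> further vertices, each adjacent to all of \<open>K\<close> and to nothing else, plus isolated
  vertices. Every subgraph has a vertex of degree at most \<open>d\<close> (a vertex outside \<open>K\<close> if there
  is one, otherwise any vertex of \<open>K\<close>). Its cliques are the subsets of \<open>K\<close>, the subsets of \<open>K\<close>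
  with one further adjacent vertex added, and the isolated singletons, so it has
  \<open>(k + 1) 2^d + (n - d - k)\<close> cliques and \<open>d(d-1)/2 + dk\<close> edges. The congruence condition on \<open>m\<close>
  says precisely that \<open>m\<close> has this form, and the upper bound on \<open>m\<close> that \<open>d + k \<le> n\<close>.\<close>

definition complete_split_edges :: "'a set \<Rightarrow> 'a set \<Rightarrow> 'a set set" where
  "complete_split_edges K I = {e. e \<subseteq> K \<and> card e = 2} \<union> (\<lambda>(u, v). {u, v}) ` (K \<times> I)"

lemma degree_le_card:
  assumes "finite S" and "\<And>e. e \<in> E \<Longrightarrow> v \<in> e \<Longrightarrow> \<exists>u\<in>S. e = {u, v}"
  shows "degree E v \<le> card S"
proof -
  have "{e\<in>E. v \<in> e} \<subseteq> (\<lambda>u. {u, v}) ` S"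
    using assms(2) by blast
  then have "degree E v \<le> card ((\<lambda>u. {u, v}) ` S)"
    unfolding degree_def using assms(1) by (intro card_mono) auto
  also have "\<dots> \<le> card S"
    using assms(1) by (rule card_image_le)
  finally show ?thesis .
qed

locale complete_split_graph =
  fixes V K I :: "'a set"
  assumes finite_V: "finite V" and K_subset: "K \<subseteq> V" and I_subset: "I \<subseteq> V"
    and disjoint: "K \<inter> I = {}"
begin

abbreviation E :: "'a set set" where
  "E \<equiv> complete_split_edges K I"

lemma finite_K: "finite K" and finite_I: "finite I"
  using finite_subset K_subset I_subset finite_V by blast+

lemma edgeE:
  assumes "e \<in> E"
  obtains u v where "e = {u, v}" "u \<noteq> v" "u \<in> K" "v \<in> K \<union> I"
proof -
  consider "e \<subseteq> K" "card e = 2" | u v where "e = {u, v}" "u \<in> K" "v \<in> I"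
    using assms unfolding complete_split_edges_def by auto
  then show thesis
  proof cases
    case 1
    then show thesis using that by (auto simp: card_2_iff)
  next
    case 2
    then show thesis using that disjoint by blast
  qed
qed

lemma doubleton_in_edges_iff:
  "{u, v} \<in> E \<longleftrightarrow> u \<noteq> v \<and> (u \<in> K \<and> v \<in> K \<union> I \<or> v \<in> K \<and> u \<in> I)"
proof
  assume "{u, v} \<in> E"
  then show "u \<noteq> v \<and> (u \<in> K \<and> v \<in> K \<union> I \<or> v \<in> K \<and> u \<in> I)"
    by (elim edgeE) (auto simp: doubleton_eq_iff)
next
  assume "u \<noteq> v \<and> (u \<in> K \<and> v \<in> K \<union> I \<or> v \<in> K \<and> u \<in> I)"
  moreover have "{u, v} = {v, u}" by blast
  ultimately show "{u, v} \<in> E"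
    unfolding complete_split_edges_def by (auto simp: card_2_iff)
qed

lemma simple_graph: "simple_graph V E"
proof -
  have "\<exists>u v. e = {u, v} \<and> u \<noteq> v \<and> u \<in> V \<and> v \<in> V" if "e \<in> E" for e
    using that K_subset I_subset by (elim edgeE) blast
  with finite_V show ?thesis
    unfolding simple_graph_def by blast
qed

lemma card_edges: "card E = (card K choose 2) + card K * card I"
proof -
  have "inj_on (\<lambda>(u, v). {u, v}) (K \<times> I)"
    using disjoint by (auto simp: inj_on_def doubleton_eq_iff)
  then have "card ((\<lambda>(u, v). {u, v}) ` (K \<times> I)) = card K * card I"
    by (simp add: card_image card_cartesian_product)
  moreover have "card {e. e \<subseteq> K \<and> card e = 2} = card K choose 2"
    using n_subsets[OF finite_K] by simp
  moreover have "{e. e \<subseteq> K \<and> card e = 2} \<inter> (\<lambda>(u, v). {u, v}) ` (K \<times> I) = {}"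
    using disjoint by auto
  ultimately show ?thesis
    unfolding complete_split_edges_def using finite_K finite_I
    by (simp add: card_Un_disjoint)
qed

lemma degenerate: "degenerate (card K) V E"
  unfolding degenerate_def
proof (intro allI impI, elim conjE)
  fix V' E' assume "subgraph V' E' V E" "V' \<noteq> {}"
  then have E'_sub: "E' \<subseteq> E" and E'_in_V': "\<And>e. e \<in> E' \<Longrightarrow> e \<subseteq> V'"
    by (auto simp: subgraph_def)
  show "\<exists>v\<in>V'. degree E' v \<le> card K"
  proof (cases "V' \<subseteq> K")
    case True
    from \<open>V' \<noteq> {}\<close> obtain v where "v \<in> V'" by blast
    have "degree E' v \<le> card (K - {v})"
    proof (rule degree_le_card)
      fix e assume "e \<in> E'" "v \<in> e"
      from \<open>e \<in> E'\<close> E'_sub obtain a b where "e = {a, b}" "a \<noteq> b"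
        by (blast elim: edgeE)
      with \<open>v \<in> e\<close> E'_in_V'[OF \<open>e \<in> E'\<close>] True show "\<exists>u\<in>K - {v}. e = {u, v}"
        by auto
    qed (use finite_K in simp)
    then show ?thesis
      using \<open>v \<in> V'\<close> card_Diff1_le[of K v] le_trans by blast
  next
    case False
    then obtain v where "v \<in> V'" "v \<notin> K" by blast
    have "degree E' v \<le> card K"
    proof (rule degree_le_card)
      fix e assume "e \<in> E'" "v \<in> e"
      from \<open>e \<in> E'\<close> E'_sub obtain a b where "e = {a, b}" "a \<in> K"
        by (blast elim: edgeE)
      with \<open>v \<in> e\<close> \<open>v \<notin> K\<close> show "\<exists>u\<in>K. e = {u, v}"
        by auto
    qed (rule finite_K)
    with \<open>v \<in> V'\<close> show ?thesis by blast
  qed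
qed

lemma cliques_eq:
  "{S. is_clique V E S} =
     Pow K \<union> (\<lambda>(v, T). insert v T) ` (I \<times> Pow K) \<union> (\<lambda>v. {v}) ` (V - K - I)"
  (is "_ = ?R")
proof (intro equalityI subsetI)
  fix S assume "S \<in> {S. is_clique V E S}"
  then have "S \<subseteq> V" and adj: "\<And>u v. u \<in> S \<Longrightarrow> v \<in> S \<Longrightarrow> u \<noteq> v \<Longrightarrow> {u, v} \<in> E"
    by (auto simp: is_clique_def)
  show "S \<in> ?R"
  proof (cases "S \<subseteq> K")
    case False
    then obtain v where v: "v \<in> S" "v \<notin> K" by blast
    show ?thesis
    proof (cases "v \<in> I")
      case True
      have "S - {v} \<subseteq> K"
        using adj[OF v(1)] v(2) by (auto simp: doubleton_in_edges_iff)
      then have "(v, S - {v}) \<in> I \<times> Pow K" and "S = (\<lambda>(v, T). insert v T) (v, S - {v})"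
        using True v(1) by auto
      then show ?thesis by blast
    next
      case False
      then have "S = {v}"
        using adj[OF v(1)] v by (auto simp: doubleton_in_edges_iff)
      with False v \<open>S \<subseteq> V\<close> show ?thesis by auto
    qed
  qed blast
next
  fix S assume "S \<in> ?R"
  then show "S \<in> {S. is_clique V E S}"
    using K_subset I_subset disjoint
    unfolding is_clique_def by (auto simp: doubleton_in_edges_iff)
qed

lemma num_cliques_eq: "num_cliques V E = 2 ^ card K + card I * 2 ^ card K + card (V - K - I)"
proof -
  let ?cones = "(\<lambda>(v, T). insert v T) ` (I \<times> Pow K)"
  let ?singletons = "(\<lambda>v. {v}) ` (V - K - I)"
  have "inj_on (\<lambda>(v, T). insert v T) (I \<times> Pow K)"
  proof (rule inj_onI, clarsimp)
    fix v T v' T'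
    assume "v \<in> I" "T \<subseteq> K" "v' \<in> I" "T' \<subseteq> K" and eq: "insert v T = insert v' T'"
    then have "v \<notin> K" "v' \<notin> K" "v \<notin> T" "v' \<notin> T'"
      using disjoint by auto
    moreover have "v' \<in> insert v T"
      by (simp add: eq)
    ultimately have "v = v'"
      using \<open>T \<subseteq> K\<close> by auto
    with eq \<open>v \<notin> T\<close> \<open>v' \<notin> T'\<close> show "v = v' \<and> T = T'"
      by (metis Diff_insert_absorb)
  qed
  then have "card ?cones = card I * 2 ^ card K"
    using finite_K by (simp add: card_image card_cartesian_product card_Pow)
  moreover have "card ?singletons = card (V - K - I)"
    by (rule card_image) simp
  moreover have "card (Pow K) = 2 ^ card K"
    using finite_K by (rule card_Pow)
  moreover have "Pow K \<inter> ?cones = {}"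
    using disjoint by auto
  moreover have "(Pow K \<union> ?cones) \<inter> ?singletons = {}"
    by auto
  ultimately show ?thesis
    unfolding num_cliques_def cliques_eq using finite_K finite_I finite_V
    by (simp add: card_Un_disjoint)
qed

end

lemma two_mult_choose_two: "2 * (d choose 2) = d * (d - 1)"
proof -
  have "even (d * (d - 1))"
    by (cases "even d") auto
  then show ?thesis
    by (simp add: choose_two)
qed

lemma Suc_choose_two: "Suc d choose 2 = (d choose 2) + d"
  by (simp add: numeral_2_eq_2)

lemma choose_two_mod_self: "(d choose 2) mod d = (if even d then d div 2 else 0)"
proof (cases "even d")
  case True
  then obtain j where d: "d = 2 * j" by blast
  have "2 * (d choose 2) = 2 * (d * (j - 1) + j)"
    unfolding two_mult_choose_two d by (cases j) (simp_all add: algebra_simps)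
  then have "d choose 2 = d * (j - 1) + j"
    by (simp only: mult_cancel_left) simp
  then have "(d choose 2) mod d = j mod d"
    by simp
  with True d show ?thesis
    by (cases j) simp_all
next
  case False
  then obtain j where d: "d = 2 * j + 1" by (blast elim: oddE)
  have "2 * (d choose 2) = 2 * (d * j)"
    unfolding two_mult_choose_two d by (simp add: algebra_simps)
  with False show ?thesis
    by simp
qed

lemma choose_two_plus_multiple:
  fixes d m n :: nat
  assumes "d \<ge> 1" and "d choose 2 \<le> m"
    and "int m \<le> int d * int n - int ((d + 1) choose 2)" and "(d choose 2) mod d = m mod d"
  obtains k where "m = (d choose 2) + d * k" and "d + k \<le> n"
proof -
  from assms(4)[symmetric] have "d dvd m - (d choose 2)"
    using mod_eq_dvd_iff_nat[OF assms(2)] by simp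
  then obtain k where k: "m = (d choose 2) + d * k"
    using assms(2) by (metis dvdE le_add_diff_inverse)
  have "2 * int (d choose 2) = int d * (int d - 1)"
    using arg_cong[OF two_mult_choose_two[of d], of int] assms(1) by (simp add: of_nat_diff)
  with assms(3) have "int d * (int k + int d) \<le> int d * int n"
    unfolding k Suc_choose_two[unfolded Suc_eq_plus1] by (simp add: algebra_simps)
  then have "d + k \<le> n"
    using assms(1) by simp
  with k that show thesis
    by blast
qed

lemma clique_count_identity:
  fixes d k n :: nat
  assumes "d \<ge> 1" and "d + k \<le> n"
  shows "real (2 ^ d + k * 2 ^ d + (n - d - k)) =
           real n + (2 ^ d - 1) * real ((d choose 2) + d * k) / real d
             - ((real d - 3) * 2 ^ d + real d + 1) / 2"
proof -
  have C: "real (d choose 2) = real d * (real d - 1) / 2"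
    using arg_cong[OF two_mult_choose_two[of d], of real] assms(1) by (simp add: of_nat_diff)
  from assms show ?thesis
    by (simp add: C of_nat_diff field_simps)
qed

theorem proposition4:
  fixes d n m :: nat
  assumes "d \<ge> 1"
    and "d choose 2 \<le> m"
    and "int m \<le> int d * int n - int ((d + 1) choose 2)"
    and "odd d \<longrightarrow> m mod d = 0"
    and "even d \<longrightarrow> m mod d = d div 2"
  shows "\<exists>(V :: nat set) (E :: nat set set).
           simple_graph V E \<and> degenerate d V E \<and> card V = n \<and> card E = m \<and>
           real (num_cliques V E) =
             real n + (2 ^ d - 1) * real m / real d
               - ((real d - 3) * 2 ^ d + real d + 1) / 2"
proof -
  have "(d choose 2) mod d = m mod d"
    using assms(4,5) by (simp add: choose_two_mod_self)
  with assms(1-3) obtain k where m: "m = (d choose 2) + d * k" and k: "d + k \<le> n"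
    by (rule choose_two_plus_multiple)
  then interpret G: complete_split_graph "{..<n}" "{..<d}" "{d..<d + k}"
    by unfold_locales auto
  show ?thesis
  proof (intro exI conjI)
    show "simple_graph {..<n} G.E"
      by (rule G.simple_graph)
    show "degenerate d {..<n} G.E"
      using G.degenerate by simp
    show "card G.E = m"
      using G.card_edges m by simp
    have "{..<n} - {..<d} - {d..<d + k} = {d + k..<n}"
      by auto
    then show "real (num_cliques {..<n} G.E) =
        real n + (2 ^ d - 1) * real m / real d - ((real d - 3) * 2 ^ d + real d + 1) / 2"
      using G.num_cliques_eq clique_count_identity[OF assms(1) k] m by simp
  qed simp
qed

end
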